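(* Let $u\in(0,1/2)$ and let $f\in L^1(\mu)$ be strictly increasing on $[0,1]$. Then \[\int_u^1 \hat F f\,d\mu<\int_u^1 f\,d\mu;\] more precisely, $\int_u^1 f\,d\mu-\int_u^1\hat F f\,d\mu\ge \bigl(f(\tfrac{1}{1+u})-f(u)\bigr)\log(1+u)$.
   Context: $\mu$ is the measure on $[0,1]$ with $d\mu=dx/x$. $\hat F$ is the transfer operator of the Farey map $F$ (where $F(x)=x/(1-x)$ for $0\le x\le1/2$, $F(x)=(1-x)/x$ for $1/2<x\le1$) with respect to $\mu$, i.e. the positive linear operator on $L^1(\mu)$ with $\int_B\hat Ff\,d\mu=\int_{F^{-1}B}f\,d\mu$ for all Borel $B\subseteq[0,1]$; explicitly $\hat Ff(x)=\dfrac{f(x/(1+x))+x\,f(1/(1+x))}{1+x}$. *)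

theory Defs
  imports "HOL-Analysis.Analysis"
begin

definition farey_mu :: "real measure" where
  "farey_mu = density (restrict_space lborel {0..1}) (\<lambda>x. ennreal (1 / x))"

text \<open>Transfer operator of the Farey map with respect to mu (explicit formula).\<close>
definition farey_transfer :: "(real \<Rightarrow> real) \<Rightarrow> real \<Rightarrow> real" where
  "farey_transfer f x = (f (x / (1 + x)) + x * f (1 / (1 + x))) / (1 + x)"

end

theory Submission
  imports Defs
begin

text \<open>The inverse branches of the Farey map are x/(1+x) and 1/(1+x). Substituting along them gives
  \<open>\<integral>[u,1] F\<^sup>^f d\<mu> = \<integral>[u/(1+u), 1/(1+u)] f d\<mu>\<close>, so the deficit
  \<open>\<integral>[u,1] f d\<mu> - \<integral>[u,1] F\<^sup>^f d\<mu>\<close> equals \<open>\<integral>[1/(1+u), 1] f d\<mu> - \<integral>[u/(1+u), u] f d\<mu>\<close>.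
  Both intervals have \<open>\<mu>\<close>-mass \<open>ln (1+u)\<close>, and monotonicity bounds f below by \<open>f (1/(1+u))\<close>
  on the first and above by \<open>f u\<close> on the second.\<close>

lemma mono_on_Icc_extend:
  fixes f :: "real \<Rightarrow> real"
  assumes "mono_on {a..b} f" and "a \<le> b"
  shows "mono (\<lambda>x. f (max a (min b x)))"
proof (rule monoI)
  fix x y :: real
  assume "x \<le> y"
  then show "f (max a (min b x)) \<le> f (max a (min b y))"
    using \<open>a \<le> b\<close> by (intro mono_onD[OF assms(1)]) auto
qed

lemma set_integrable_Icc_bounded:
  fixes h :: "real \<Rightarrow> real"
  assumes [measurable]: "h \<in> borel_measurable borel"
    and bound: "\<And>x. x \<in> {a..b} \<Longrightarrow> \<bar>h x\<bar> \<le> C"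
  shows "set_integrable lborel {a..b} h"
  unfolding set_integrable_def
  by (rule integrableI_bounded_set[where A="{a..b}" and B=C])
    (auto simp: bound indicator_def emeasure_lborel_Icc_eq)

lemma set_integrable_mirror:
  fixes h :: "real \<Rightarrow> real"
  assumes "set_integrable lborel {a..b} h"
  shows "set_integrable lborel {-b..-a} (\<lambda>x. h (- x))"
proof -
  have "(\<lambda>x. indicator {-b..-a} x *\<^sub>R h (- x)) = (\<lambda>x. indicator {a..b} (0 + -1 * x) *\<^sub>R h (0 + -1 * x))"
    by (auto simp: indicator_def of_bool_def)
  then show ?thesis
    using assms lborel_integrable_real_affine_iff[of "-1" "\<lambda>x. indicator {a..b} x *\<^sub>R h x" 0]
    by (simp add: set_integrable_def)
qed

lemma mono_set_integrable_div_self: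
  fixes h :: "real \<Rightarrow> real"
  assumes "mono h" and "0 < a"
  shows "set_integrable lborel {a..b} (\<lambda>x. h x / x)"
proof (rule set_integrable_Icc_bounded)
  show "(\<lambda>x. h x / x) \<in> borel_measurable borel"
    using borel_measurable_mono[OF \<open>mono h\<close>] by measurable
next
  fix x assume x: "x \<in> {a..b}"
  then have "h a \<le> h x" "h x \<le> h b"
    using \<open>mono h\<close> by (auto dest: monoD)
  then have "\<bar>h x\<bar> \<le> \<bar>h a\<bar> + \<bar>h b\<bar>" by linarith
  then show "\<bar>h x / x\<bar> \<le> (\<bar>h a\<bar> + \<bar>h b\<bar>) / a"
    using x \<open>0 < a\<close> by (auto simp: abs_div intro!: frac_le)
qed

lemma mono_interval_integral_div_self_sum:
  fixes h :: "real \<Rightarrow> real" and a b c :: real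
  assumes "mono h" and "0 < a" "a \<le> b" "b \<le> c"
  shows "(LBINT x=a..b. h x / x) + (LBINT x=b..c. h x / x) = (LBINT x=a..c. h x / x)"
proof (rule interval_integral_sum)
  have "set_integrable lborel {a<..<c} (\<lambda>x. h x / x)"
    by (rule set_integrable_subset[OF mono_set_integrable_div_self[OF assms(1,2), of c]]) auto
  then show "interval_lebesgue_integrable lborel (min (ereal a) (min (ereal b) (ereal c)))
      (max (ereal a) (max (ereal b) (ereal c))) (\<lambda>x. h x / x)"
    using assms by (simp add: interval_lebesgue_integrable_def min_def max_def)
qed

lemma interval_integral_const_div_self:
  fixes a b c :: real
  assumes "0 < a" "0 < b"
  shows "(LBINT x=a..b. c / x) = c * ln (b / a)"
proof -
  have "(LBINT x=a..b. c / x) = c * ln b - c * ln a"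
  proof (rule interval_integral_FTC_finite)
    show "continuous_on {min a b..max a b} (\<lambda>x. c / x)"
      using assms by (intro continuous_intros) auto
    fix x assume "min a b \<le> x" "x \<le> max a b"
    then have "0 < x" using assms by linarith
    then show "((\<lambda>x. c * ln x) has_vector_derivative c / x) (at x within {min a b..max a b})"
      unfolding has_real_derivative_iff_has_vector_derivative[symmetric]
      by (auto intro!: derivative_eq_intros)
  qed
  then show ?thesis
    using assms by (simp add: ln_div right_diff_distrib)
qed

lemma mono_interval_integral_div_self_bounds:
  fixes h :: "real \<Rightarrow> real"
  assumes "mono h" and "0 < a" "a \<le> b"
  shows "h a * ln (b / a) \<le> (LBINT x=a..b. h x / x)"
    and "(LBINT x=a..b. h x / x) \<le> h b * ln (b / a)"
proof -
  have integrable: "set_integrable lborel {a..b} (\<lambda>x. h' x / x)" if "mono h'" for h' :: "real \<Rightarrow> real"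
    using mono_set_integrable_div_self[OF that \<open>0 < a\<close>] .
  have const: "(LBINT x=a..b. c / x) = c * ln (b / a)" for c
    using assms by (intro interval_integral_const_div_self) auto
  have "(LBINT x:{a..b}. h a / x) \<le> (LBINT x:{a..b}. h x / x)"
    using assms by (intro set_integral_mono integrable) (auto simp: mono_def divide_right_mono)
  then show "h a * ln (b / a) \<le> (LBINT x=a..b. h x / x)"
    using \<open>a \<le> b\<close> by (simp add: interval_integral_Icc flip: const)
  have "(LBINT x:{a..b}. h x / x) \<le> (LBINT x:{a..b}. h b / x)"
    using assms by (intro set_integral_mono integrable) (auto simp: mono_def divide_right_mono)
  then show "(LBINT x=a..b. h x / x) \<le> h b * ln (b / a)"
    using \<open>a \<le> b\<close> by (simp add: interval_integral_Icc flip: const)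
qed

lemma interval_integral_div_self_subst_left:
  fixes h :: "real \<Rightarrow> real" and a b :: real
  assumes "mono h" and "0 < a" "a \<le> b"
  shows "set_integrable lborel {a..b} (\<lambda>x. h (x / (1 + x)) / (x * (1 + x)))"
    and "(LBINT x=a..b. h (x / (1 + x)) / (x * (1 + x))) = (LBINT y=a/(1+a)..b/(1+b). h y / y)"
proof -
  have "set_integrable lborel {a/(1+a)..b/(1+b)} (\<lambda>y. h y / y)"
    using assms by (intro mono_set_integrable_div_self) auto
  note subst = interval_integral_substitution[where f="\<lambda>y. h y / y" and g="\<lambda>x. x / (1 + x)"
      and g'="\<lambda>x. 1 / (1 + x)^2" and a=a and b=b, OF this]
  have deriv: "((\<lambda>x. x / (1 + x)) has_real_derivative 1 / (1 + x)^2) (at x)" if "x \<in> {a..b}" for x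
    using that \<open>0 < a\<close> by (auto intro!: derivative_eq_intros simp: field_simps power2_eq_square)
  have cont: "continuous_on {a..b} (\<lambda>x. 1 / (1 + x)^2 :: real)"
    using \<open>0 < a\<close> by (intro continuous_intros) (auto simp: add_pos_pos)
  have eq: "h (x / (1 + x)) / (x / (1 + x)) * (1 / (1 + x)^2) = h (x / (1 + x)) / (x * (1 + x))"
    if "x \<in> {a..b}" for x
  proof -
    have "x \<noteq> 0" "1 + x \<noteq> 0" using that \<open>0 < a\<close> by auto
    then show ?thesis by (simp add: divide_simps power2_eq_square)
  qed
  have nonneg: "0 \<le> 1 / (1 + x)^2" for x :: real
    by simp
  show "set_integrable lborel {a..b} (\<lambda>x. h (x / (1 + x)) / (x * (1 + x)))"
    by (rule iffD1[OF set_integrable_cong[OF refl refl eq]])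
      (simp, rule subst(1)[OF deriv cont nonneg \<open>a \<le> b\<close>])
  have "(LBINT x:{a..b}. h (x / (1 + x)) / (x / (1 + x)) * (1 / (1 + x)^2))
      = (LBINT x:{a..b}. h (x / (1 + x)) / (x * (1 + x)))"
    using eq by (intro set_lebesgue_integral_cong) auto
  then show "(LBINT x=a..b. h (x / (1 + x)) / (x * (1 + x))) = (LBINT y=a/(1+a)..b/(1+b). h y / y)"
    using subst(2)[OF deriv cont nonneg \<open>a \<le> b\<close>] \<open>a \<le> b\<close> by (simp only: interval_integral_Icc)
qed

lemma interval_integral_div_self_subst_right:
  fixes h :: "real \<Rightarrow> real" and a b :: real
  assumes "mono h" and "0 < a" "a \<le> b"
  shows "set_integrable lborel {a..b} (\<lambda>x. h (1 / (1 + x)) / (1 + x))"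
    and "(LBINT x=a..b. h (1 / (1 + x)) / (1 + x)) = (LBINT y=1/(1+b)..1/(1+a). h y / y)"
proof -
  txt \<open>The substitution theorem needs a nondecreasing substitution, so the decreasing branch
    \<open>1/(1+x)\<close> is handled as \<open>-1/(1+x)\<close> after reflecting the target interval.\<close>
  have "set_integrable lborel {1/(1+b)..1/(1+a)} (\<lambda>y. h y / y)"
    using assms by (intro mono_set_integrable_div_self) auto
  then have "set_integrable lborel {-1/(1+a)..-1/(1+b)} (\<lambda>z. h (- z) / (- z))"
    using set_integrable_mirror by fastforce
  note subst = interval_integral_substitution[where f="\<lambda>z. h (- z) / (- z)" and g="\<lambda>x. -1 / (1 + x)"
      and g'="\<lambda>x. 1 / (1 + x)^2" and a=a and b=b, OF this]
  have deriv: "((\<lambda>x. -1 / (1 + x)) has_real_derivative 1 / (1 + x)^2) (at x)" if "x \<in> {a..b}" for x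
    using that \<open>0 < a\<close> by (auto intro!: derivative_eq_intros simp: field_simps power2_eq_square)
  have cont: "continuous_on {a..b} (\<lambda>x. 1 / (1 + x)^2 :: real)"
    using \<open>0 < a\<close> by (intro continuous_intros) (auto simp: add_pos_pos)
  have nonneg: "0 \<le> 1 / (1 + x)^2" for x :: real
    by simp
  have eq: "h (- (-1 / (1 + x))) / (- (-1 / (1 + x))) * (1 / (1 + x)^2) = h (1 / (1 + x)) / (1 + x)"
    if "x \<in> {a..b}" for x
  proof -
    have "1 + x \<noteq> 0" using that \<open>0 < a\<close> by auto
    then show ?thesis by (simp add: divide_simps power2_eq_square)
  qed
  show "set_integrable lborel {a..b} (\<lambda>x. h (1 / (1 + x)) / (1 + x))"
    by (rule iffD1[OF set_integrable_cong[OF refl refl eq]])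
      (simp, rule subst(1)[OF deriv cont nonneg \<open>a \<le> b\<close>])
  have "(LBINT x:{a..b}. h (- (-1 / (1 + x))) / (- (-1 / (1 + x))) * (1 / (1 + x)^2))
      = (LBINT x:{a..b}. h (1 / (1 + x)) / (1 + x))"
    using eq by (intro set_lebesgue_integral_cong) auto
  moreover have "(LBINT y=1/(1+b)..1/(1+a). h y / y) = (LBINT z=-1/(1+a)..-1/(1+b). h (- z) / (- z))"
    by (subst interval_integral_reflect) simp
  ultimately show "(LBINT x=a..b. h (1 / (1 + x)) / (1 + x)) = (LBINT y=1/(1+b)..1/(1+a). h y / y)"
    using subst(2)[OF deriv cont nonneg \<open>a \<le> b\<close>] \<open>a \<le> b\<close> by (simp only: interval_integral_Icc)
qed

lemma farey_transfer_cong: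
  assumes "\<And>y. y \<in> {0..1} \<Longrightarrow> g y = f y" and "0 \<le> x"
  shows "farey_transfer g x = farey_transfer f x"
proof -
  have "x / (1 + x) \<in> {0..1}" "1 / (1 + x) \<in> {0..1}"
    using \<open>0 \<le> x\<close> by (auto simp: field_simps)
  then show ?thesis
    unfolding farey_transfer_def by (simp add: assms(1))
qed

lemma farey_transfer_div_self_eq:
  fixes h :: "real \<Rightarrow> real" and x :: real
  assumes "0 < x"
  shows "farey_transfer h x / x = h (x / (1 + x)) / (x * (1 + x)) + h (1 / (1 + x)) / (1 + x)"
proof -
  have "x \<noteq> 0" "1 + x \<noteq> 0" using assms by auto
  then show ?thesis
    unfolding farey_transfer_def by (simp add: divide_simps)
qed

lemma interval_integral_farey_transfer_div_self:
  fixes h :: "real \<Rightarrow> real" and a b :: real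
  assumes "mono h" and "0 < a" "a \<le> b"
  shows "(LBINT x=a..b. farey_transfer h x / x)
      = (LBINT y=a/(1+a)..b/(1+b). h y / y) + (LBINT y=1/(1+b)..1/(1+a). h y / y)"
proof -
  note left = interval_integral_div_self_subst_left[OF assms]
    and right = interval_integral_div_self_subst_right[OF assms]
  have interval_integrable: "interval_lebesgue_integrable lborel a b g"
    if "set_integrable lborel {a..b} g" for g :: "real \<Rightarrow> real"
    unfolding interval_lebesgue_integrable_def
    using set_integrable_subset[OF that, of "{a<..<b}"] \<open>a \<le> b\<close> by (auto simp: subset_iff)
  have "(LBINT x=a..b. farey_transfer h x / x)
      = (LBINT x=a..b. h (x / (1 + x)) / (x * (1 + x)) + h (1 / (1 + x)) / (1 + x))"
    using assms by (intro interval_integral_cong farey_transfer_div_self_eq) (auto simp: einterval_iff)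
  also have "\<dots> = (LBINT x=a..b. h (x / (1 + x)) / (x * (1 + x))) + (LBINT x=a..b. h (1 / (1 + x)) / (1 + x))"
    using left(1) right(1) by (intro interval_lebesgue_integral_add(2) interval_integrable)
  finally show ?thesis
    using left(2) right(2) by simp
qed

lemma set_integral_farey_mu:
  fixes g :: "real \<Rightarrow> real" and a b :: real
  assumes [measurable]: "g \<in> borel_measurable borel"
    and "0 < a" "a \<le> b" "b \<le> 1"
  shows "(\<integral>x\<in>{a..b}. g x \<partial>farey_mu) = (LBINT x=a..b. g x / x)"
proof -
  have "(\<integral>x\<in>{a..b}. g x \<partial>farey_mu)
      = (\<integral>x. (1 / x) *\<^sub>R (indicator {a..b} x *\<^sub>R g x) \<partial>restrict_space lborel {0..1})"
    unfolding farey_mu_def set_lebesgue_integral_def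
    by (rule integral_density)
      (auto intro!: AE_I2 measurable_restrict_space1 simp: space_restrict_space)
  also have "\<dots> = (\<integral>x. indicator {0..1} x *\<^sub>R ((1 / x) *\<^sub>R (indicator {a..b} x *\<^sub>R g x)) \<partial>lborel)"
    by (rule integral_restrict_space) auto
  also have "\<dots> = (LBINT x:{a..b}. g x / x)"
    unfolding set_lebesgue_integral_def
    by (intro Bochner_Integration.integral_cong) (use assms in \<open>auto simp: indicator_def\<close>)
  finally show ?thesis
    using \<open>a \<le> b\<close> by (simp add: interval_integral_Icc)
qed

lemma mono_farey_transfer_set_integral_deficit:
  fixes g :: "real \<Rightarrow> real" and u :: real
  assumes "mono g" and "0 < u" "u \<le> 1 / (1 + u)"
  shows "(g (1 / (1 + u)) - g u) * ln (1 + u)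
      \<le> (\<integral>x\<in>{u..1}. g x \<partial>farey_mu) - (\<integral>x\<in>{u..1}. farey_transfer g x \<partial>farey_mu)"
proof -
  define I where "I a b = (LBINT x=a..b. g x / x)" for a b :: real
  define v where "v = 1 / (1 + u)"
  have [measurable]: "g \<in> borel_measurable borel"
    using borel_measurable_mono[OF \<open>mono g\<close>] .
  have u_le_v: "u \<le> v" and v_le_1: "v \<le> 1"
    using assms by (auto simp: v_def)
  then have u_le_1: "u \<le> 1"
    by linarith
  then have half_le_v: "1/2 \<le> v"
    using \<open>0 < u\<close> by (simp add: v_def field_simps)
  have low: "0 < u/(1+u)" "u/(1+u) \<le> 1/2" "u/(1+u) \<le> u"
    using \<open>0 < u\<close> u_le_1 by (auto simp: field_simps)
  have split: "I a b + I b c = I a c" if "0 < a" "a \<le> b" "b \<le> c" for a b c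
    unfolding I_def using \<open>mono g\<close> that by (rule mono_interval_integral_div_self_sum)
  have F: "(\<integral>x\<in>{u..1}. g x \<partial>farey_mu) = I u v + I v 1"
    using assms u_le_v v_le_1 by (simp add: set_integral_farey_mu split I_def[symmetric])
  have "(\<integral>x\<in>{u..1}. farey_transfer g x \<partial>farey_mu) = (LBINT x=u..1. farey_transfer g x / x)"
  proof -
    have "farey_transfer g \<in> borel_measurable borel"
      unfolding farey_transfer_def by measurable
    then show ?thesis
      using set_integral_farey_mu[of "farey_transfer g" u 1] \<open>0 < u\<close> u_le_1
      by (simp flip: one_ereal_def)
  qed
  also have "\<dots> = I (u/(1+u)) (1/2) + I (1/2) v"
    using interval_integral_farey_transfer_div_self[OF \<open>mono g\<close> \<open>0 < u\<close> u_le_1]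
    unfolding I_def v_def by (simp flip: one_ereal_def)
  also have "\<dots> = I (u/(1+u)) u + I u v"
    using low half_le_v u_le_v by (simp add: split)
  finally have T: "(\<integral>x\<in>{u..1}. farey_transfer g x \<partial>farey_mu) = I (u/(1+u)) u + I u v" .
  have "g v * ln (1 / v) \<le> I v 1"
    unfolding I_def using \<open>mono g\<close> \<open>0 < u\<close> v_le_1
    by (intro mono_interval_integral_div_self_bounds(1)) (auto simp: v_def)
  moreover have "I (u/(1+u)) u \<le> g u * ln (u / (u/(1+u)))"
    unfolding I_def using \<open>mono g\<close> low by (intro mono_interval_integral_div_self_bounds(2))
  ultimately show ?thesis
    using F T \<open>0 < u\<close> by (simp add: v_def left_diff_distrib)
qed

theorem mainTheorem4:
  fixes f :: "real \<Rightarrow> real" and u :: real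
  assumes "0 < u" and "u < 1/2"
    and "integrable farey_mu f"
    and "strict_mono_on {0..1} f"
  shows "(\<integral>x\<in>{u..1}. farey_transfer f x \<partial>farey_mu) < (\<integral>x\<in>{u..1}. f x \<partial>farey_mu) \<and>
         (\<integral>x\<in>{u..1}. f x \<partial>farey_mu) - (\<integral>x\<in>{u..1}. farey_transfer f x \<partial>farey_mu)
           \<ge> (f (1 / (1 + u)) - f u) * ln (1 + u)"
proof -
  define g where "g x = f (max 0 (min 1 x))" for x
  have "mono g"
    unfolding g_def using strict_mono_on_imp_mono_on[OF assms(4)] by (rule mono_on_Icc_extend) simp
  have g_eq_f: "g y = f y" if "y \<in> {0..1}" for y
    using that by (simp add: g_def)
  have "u * u < u * (1/2)"
    using assms(1,2) by (intro mult_strict_left_mono) auto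
  moreover have "u * (1 + u) = u + u * u"
    by algebra
  ultimately have "u * (1 + u) < 1"
    using assms(2) by linarith
  then have u_less: "u < 1 / (1 + u)"
    using assms(1) by (simp add: field_simps)
  have "(\<integral>x\<in>{u..1}. g x \<partial>farey_mu) = (\<integral>x\<in>{u..1}. f x \<partial>farey_mu)"
    and "(\<integral>x\<in>{u..1}. farey_transfer g x \<partial>farey_mu) = (\<integral>x\<in>{u..1}. farey_transfer f x \<partial>farey_mu)"
    using \<open>0 < u\<close> unfolding set_lebesgue_integral_def
    by (auto intro!: Bochner_Integration.integral_cong farey_transfer_cong[OF g_eq_f]
        simp: g_eq_f split: split_indicator)
  moreover have "f u < f (1 / (1 + u))"
    using strict_mono_onD[OF assms(4) _ _ u_less] assms(1,2) by simp
  then have "0 < (f (1 / (1 + u)) - f u) * ln (1 + u)"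
    using \<open>0 < u\<close> by (simp add: mult_pos_pos)
  moreover have "g u = f u" "g (1 / (1 + u)) = f (1 / (1 + u))"
    using assms(1,2) by (simp_all add: g_eq_f)
  ultimately show ?thesis
    using mono_farey_transfer_set_integral_deficit[OF \<open>mono g\<close> \<open>0 < u\<close> less_imp_le[OF u_less]]
    by simp
qed

end
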